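(* Let $(a_n)$ be a sequence of positive reals with $1/a_n=O(1)$ as $n\to\infty$, and suppose that for some $\varepsilon>0$, $$\sum_{i=1}^{n}a_i=O\!\left(n(\ln n)^{1-\varepsilon}\right).$$ Then, as $n\to\infty$, $$\sum_{i=3}^{n}\frac{\ln\ln i}{\ln^2 i}\, i a_i\sim\frac{\ln\ln n}{\ln^2 n}\sum_{i=3}^{n} i a_i.$$ *)

theory Defs
  imports "HOL-Analysis.Analysis" "HOL-Library.Landau_Symbols"
begin

end

theory Submission
  imports Defs "HOL-Real_Asymp.Real_Asymp"
begin

text \<open>
  Write \<open>b\<^sub>i = i a\<^sub>i\<close>, \<open>S\<^sub>n = \<Sum>\<^sub>i\<^sub>\<le>\<^sub>n b\<^sub>i\<close> and \<open>w(x) = ln ln x / ln\<^sup>2 x\<close>. Split the weighted sum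
  at \<open>m = n / ln\<^sup>2 n\<close>. On the tail \<open>m < i \<le> n\<close> the weight is squeezed between \<open>w(n)\<close> and
  \<open>w(m) \<sim> w(n)\<close>, so the tail is \<open>w(n)\<close> times its unweighted sum up to a factor \<open>1 + o(1)\<close>.
  The head is at most \<open>S\<^sub>m \<le> m \<Sum>\<^sub>i\<^sub>\<le>\<^sub>m a\<^sub>i = O(m\<^sup>2 ln m) = O(n\<^sup>2 / ln\<^sup>3 n)\<close>, while
  \<open>a\<^sub>i \<ge> c > 0\<close> gives \<open>S\<^sub>n \<ge> c n\<^sup>2 / 4\<close>, so the head is \<open>o(w(n) S\<^sub>n)\<close>.
  Only \<open>\<Sum>\<^sub>i\<^sub>\<le>\<^sub>n a\<^sub>i = O(n ln n)\<close> is needed, i.e. the case \<open>\<epsilon> = 0\<close>.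
\<close>

subsection \<open>Sums with a slowly varying weight\<close>

lemma sum_atLeastAtMost_split:
  fixes f :: "nat \<Rightarrow> 'a::comm_monoid_add"
  assumes "k \<le> Suc m" "m \<le> n"
  shows "(\<Sum>i=k..n. f i) = (\<Sum>i=k..m. f i) + (\<Sum>i=Suc m..n. f i)"
proof -
  have "{k..n} = {k..m} \<union> {Suc m..n}" using assms by auto
  thus ?thesis by (simp add: sum.union_disjoint)
qed

lemma abs_sum_weighted_le:
  fixes w b :: "'a \<Rightarrow> real"
  assumes "\<And>i. i \<in> A \<Longrightarrow> 0 \<le> b i" "\<And>i. i \<in> A \<Longrightarrow> \<bar>w i\<bar> \<le> W"
  shows "\<bar>\<Sum>i\<in>A. w i * b i\<bar> \<le> W * (\<Sum>i\<in>A. b i)"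
proof -
  have "\<bar>\<Sum>i\<in>A. w i * b i\<bar> \<le> (\<Sum>i\<in>A. \<bar>w i\<bar> * b i)"
    using sum_abs[of "\<lambda>i. w i * b i" A] assms(1) by (simp add: abs_mult)
  also have "\<dots> \<le> (\<Sum>i\<in>A. W * b i)"
    using assms by (intro sum_mono mult_right_mono) auto
  finally show ?thesis by (simp add: sum_distrib_left)
qed

lemma abs_sum_weighted_diff_le:
  fixes w b :: "'a \<Rightarrow> real"
  assumes "\<And>i. i \<in> A \<Longrightarrow> 0 \<le> b i" "\<And>i. i \<in> A \<Longrightarrow> c \<le> w i \<and> w i \<le> d"
  shows "\<bar>(\<Sum>i\<in>A. w i * b i) - c * (\<Sum>i\<in>A. b i)\<bar> \<le> (d - c) * (\<Sum>i\<in>A. b i)"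
proof -
  have "(\<Sum>i\<in>A. w i * b i) - c * (\<Sum>i\<in>A. b i) = (\<Sum>i\<in>A. (w i - c) * b i)"
    by (simp add: sum_distrib_left sum_subtractf left_diff_distrib)
  also have "\<bar>\<dots>\<bar> \<le> (d - c) * (\<Sum>i\<in>A. b i)"
    using assms by (intro abs_sum_weighted_le) auto
  finally show ?thesis .
qed

lemma sum_weighted_split_estimate:
  fixes b w :: "nat \<Rightarrow> real"
  assumes b_nonneg: "\<And>i. k \<le> i \<Longrightarrow> 0 \<le> b i"
    and w_bounded: "\<And>i. k \<le> i \<Longrightarrow> \<bar>w i\<bar> \<le> W"
    and w_between: "\<And>i. m < i \<Longrightarrow> i \<le> n \<Longrightarrow> w n \<le> w i \<and> w i \<le> w m"
    and "k \<le> m" "m \<le> n"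
  shows "\<bar>(\<Sum>i=k..n. w i * b i) - w n * (\<Sum>i=k..n. b i)\<bar>
    \<le> 2 * W * (\<Sum>i=k..m. b i) + \<bar>w m - w n\<bar> * (\<Sum>i=k..n. b i)"
proof -
  have split: "(\<Sum>i=k..n. f i) = (\<Sum>i=k..m. f i) + (\<Sum>i=Suc m..n. f i)" for f :: "nat \<Rightarrow> real"
    using assms(4,5) by (intro sum_atLeastAtMost_split) auto
  define H where "H = (\<Sum>i=k..m. b i)"
  define T where "T = (\<Sum>i=Suc m..n. b i)"
  have "0 \<le> H" "0 \<le> T" using b_nonneg assms(4) unfolding H_def T_def by (auto intro: sum_nonneg)
  have sum_b: "(\<Sum>i=k..n. b i) = H + T" unfolding H_def T_def by (rule split)
  have "\<bar>\<Sum>i=k..m. w i * b i\<bar> \<le> W * H"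
    unfolding H_def using b_nonneg w_bounded by (intro abs_sum_weighted_le) auto
  moreover have "\<bar>w n\<bar> * H \<le> W * H"
    using w_bounded[of n] assms(4,5) \<open>0 \<le> H\<close> by (intro mult_right_mono) auto
  ultimately have head: "\<bar>(\<Sum>i=k..m. w i * b i) - w n * H\<bar> \<le> 2 * W * H"
    using abs_triangle_ineq4[of "\<Sum>i=k..m. w i * b i" "w n * H"] \<open>0 \<le> H\<close> by (simp add: abs_mult)
  have "\<bar>(\<Sum>i=Suc m..n. w i * b i) - w n * T\<bar> \<le> (w m - w n) * T"
    unfolding T_def using b_nonneg assms(4) w_between by (intro abs_sum_weighted_diff_le) auto
  also have "\<dots> \<le> \<bar>w m - w n\<bar> * (\<Sum>i=k..n. b i)"
    unfolding sum_b using \<open>0 \<le> H\<close> \<open>0 \<le> T\<close> by (intro mult_mono) auto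
  finally have tail: "\<bar>(\<Sum>i=Suc m..n. w i * b i) - w n * T\<bar> \<le> \<bar>w m - w n\<bar> * (\<Sum>i=k..n. b i)" .
  have "(\<Sum>i=k..n. w i * b i) - w n * (\<Sum>i=k..n. b i)
      = ((\<Sum>i=k..m. w i * b i) - w n * H) + ((\<Sum>i=Suc m..n. w i * b i) - w n * T)"
    using split[of "\<lambda>i. w i * b i"] unfolding sum_b by (simp add: algebra_simps)
  hence "\<bar>(\<Sum>i=k..n. w i * b i) - w n * (\<Sum>i=k..n. b i)\<bar>
      \<le> \<bar>(\<Sum>i=k..m. w i * b i) - w n * H\<bar> + \<bar>(\<Sum>i=Suc m..n. w i * b i) - w n * T\<bar>"
    by (metis abs_triangle_ineq)
  thus ?thesis using head tail unfolding H_def by linarith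
qed

lemma sum_weighted_asymp_equiv:
  fixes b w :: "nat \<Rightarrow> real" and m :: "nat \<Rightarrow> nat"
  assumes b_nonneg: "\<And>i. k \<le> i \<Longrightarrow> 0 \<le> b i"
    and w_bounded: "\<And>i. k \<le> i \<Longrightarrow> \<bar>w i\<bar> \<le> W"
    and w_antimono: "eventually (\<lambda>i. \<forall>j\<ge>i. w j \<le> w i) at_top"
    and m_le: "eventually (\<lambda>n. m n \<le> n) at_top"
    and m_lim: "filterlim m at_top at_top"
    and w_ratio: "((\<lambda>n. w (m n) / w n) \<longlongrightarrow> 1) at_top"
    and head_small: "(\<lambda>n. \<Sum>i=k..m n. b i) \<in> o(\<lambda>n. w n * (\<Sum>i=k..n. b i))"
  shows "(\<lambda>n. \<Sum>i=k..n. w i * b i) \<sim>[at_top] (\<lambda>n. w n * (\<Sum>i=k..n. b i))"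
proof (rule smallo_imp_asymp_equiv, rule landau_o.smallI)
  fix e :: real assume e: "e > 0"
  define S where "S n = (\<Sum>i=k..n. b i)" for n
  have S_nonneg: "0 \<le> S n" for n unfolding S_def using b_nonneg by (auto intro: sum_nonneg)
  obtain N where N: "\<And>i j. N \<le> i \<Longrightarrow> i \<le> j \<Longrightarrow> w j \<le> w i"
    using w_antimono by (auto simp: eventually_at_top_linorder)
  have ev_m: "eventually (\<lambda>n. max k N \<le> m n) at_top"
    using m_lim unfolding filterlim_at_top by blast
  have "(\<lambda>n. (2 * W) * S (m n)) \<in> o(\<lambda>n. w n * S n)"
    using head_small unfolding S_def by simp
  hence ev_head: "eventually (\<lambda>n. norm (2 * W * S (m n)) \<le> e / 2 * norm (w n * S n)) at_top"
    by (rule landau_o.smallD) (use e in simp)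
  have "eventually (\<lambda>n. dist (w (m n) / w n) 1 < min (e / 2) 1) at_top"
    using e by (intro tendstoD[OF w_ratio]) simp
  hence ev_ratio: "eventually (\<lambda>n. \<bar>w (m n) - w n\<bar> \<le> e / 2 * \<bar>w n\<bar>) at_top"
  proof eventually_elim
    case (elim n)
    hence "w n \<noteq> 0" by (auto simp: dist_real_def)
    hence "\<bar>w (m n) - w n\<bar> = \<bar>w (m n) / w n - 1\<bar> * \<bar>w n\<bar>"
      by (simp add: abs_mult[symmetric] algebra_simps)
    moreover have "\<bar>w (m n) / w n - 1\<bar> \<le> e / 2" using elim by (simp add: dist_real_def)
    ultimately show ?case by (metis abs_ge_zero mult_right_mono)
  qed
  show "eventually (\<lambda>n. norm ((\<Sum>i=k..n. w i * b i) - w n * S n) \<le> e * norm (w n * S n)) at_top"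
    using ev_m m_le ev_head ev_ratio
  proof eventually_elim
    case (elim n)
    have "\<bar>(\<Sum>i=k..n. w i * b i) - w n * S n\<bar> \<le> 2 * W * S (m n) + \<bar>w (m n) - w n\<bar> * S n"
      unfolding S_def using elim(1,2) N
      by (intro sum_weighted_split_estimate[OF b_nonneg w_bounded]) auto
    also have "\<dots> \<le> e / 2 * \<bar>w n * S n\<bar> + e / 2 * \<bar>w n\<bar> * S n"
      using elim(3,4) S_nonneg[of n] by (intro add_mono mult_right_mono) auto
    also have "\<dots> = e * \<bar>w n * S n\<bar>" using S_nonneg[of n] by (simp add: abs_mult)
    finally show ?case by simp
  qed
qed

subsection \<open>The weight \<open>ln ln x / ln\<^sup>2 x\<close> and the cutoff \<open>n / ln\<^sup>2 n\<close>\<close>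

lemma ln_div_square_antimono:
  fixes s t :: real
  assumes "exp (1/2) \<le> s" "s \<le> t"
  shows "ln t / t^2 \<le> ln s / s^2"
proof -
  have "\<exists>y. ((\<lambda>x. ln x / x^2) has_real_derivative y) (at u) \<and> y \<le> 0" if "s \<le> u" "u \<le> t" for u
  proof -
    have "0 < u" "exp (1/2) \<le> u" using assms(1) that(1) exp_gt_zero[of "1/2"] by linarith+
    hence u: "0 < u" "1/2 \<le> ln u" by (simp_all only: ln_ge_iff)
    hence "((\<lambda>x. ln x / x^2) has_real_derivative (1 - 2 * ln u) / u^3) (at u)"
      by (auto intro!: derivative_eq_intros simp: field_simps power2_eq_square power3_eq_cube)
    moreover have "(1 - 2 * ln u) / u^3 \<le> 0" using u by (simp add: divide_nonpos_pos)
    ultimately show ?thesis by blast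
  qed
  from DERIV_nonpos_imp_nonincreasing[OF assms(2) this] show ?thesis by simp
qed

definition lnln_weight :: "real \<Rightarrow> real" where
  "lnln_weight x = ln (ln x) / (ln x)^2"

lemma lnln_weight_antimono:
  assumes "exp (exp (1/2)) \<le> x" "x \<le> y"
  shows "lnln_weight y \<le> lnln_weight x"
proof -
  have "0 < x" using assms(1) exp_gt_zero[of "exp (1/2)"] by linarith
  hence "exp (1/2) \<le> ln x" "ln x \<le> ln y" using assms by (auto simp: ln_ge_iff)
  thus ?thesis unfolding lnln_weight_def by (rule ln_div_square_antimono)
qed

lemma abs_lnln_weight_le_1:
  assumes "3 \<le> x"
  shows "\<bar>lnln_weight x\<bar> \<le> 1"
proof -
  have "exp 1 \<le> x" using exp_le assms by linarith
  hence ln_x: "1 \<le> ln x" using assms by (auto simp: ln_ge_iff)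
  have "ln (ln x) \<le> ln x - 1" using ln_x by (intro ln_le_minus_one) auto
  also have "\<dots> \<le> ln x * ln x" using ln_x by (simp add: order.trans[OF _ mult_right_mono[OF ln_x]])
  also have "\<dots> = (ln x)^2" by (simp add: power2_eq_square)
  finally show ?thesis using ln_x unfolding lnln_weight_def by simp
qed

definition ln_sq_cutoff :: "nat \<Rightarrow> nat" where
  "ln_sq_cutoff n = nat \<lfloor>real n / (ln (real n))^2\<rfloor>"

lemma filterlim_ln_sq_cutoff: "filterlim ln_sq_cutoff at_top at_top"
proof -
  have "filterlim (\<lambda>n. real n / (ln (real n))^2) at_top at_top" by real_asymp
  thus ?thesis unfolding ln_sq_cutoff_def
    by (intro filterlim_compose[OF filterlim_nat_sequentially]
        filterlim_compose[OF filterlim_floor_sequentially])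
qed

lemma eventually_ln_sq_cutoff_le: "eventually (\<lambda>n. ln_sq_cutoff n \<le> n) at_top"
proof -
  have "eventually (\<lambda>n. real n / (ln (real n))^2 \<le> real n) at_top" by real_asymp
  thus ?thesis unfolding ln_sq_cutoff_def
    by (elim eventually_mono) (simp add: nat_le_iff floor_le_iff)
qed

text \<open>The floor is absorbed by comparing with the weight at \<open>n / ln\<^sup>2 n - 1\<close>.\<close>

lemma lnln_weight_ln_sq_cutoff_ratio:
  "((\<lambda>n. lnln_weight (real (ln_sq_cutoff n)) / lnln_weight (real n)) \<longlongrightarrow> 1) at_top"
proof (rule tendsto_sandwich)
  define q where "q n = real n / (ln (real n))^2" for n
  have "eventually (\<lambda>n. exp (exp (1/2)) \<le> q n - 1) at_top"
    "eventually (\<lambda>n. q n \<le> real n) at_top"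
    "eventually (\<lambda>n. 0 < lnln_weight (real n)) at_top"
    unfolding q_def lnln_weight_def by real_asymp+
  hence "eventually (\<lambda>n. 1 \<le> lnln_weight (real (ln_sq_cutoff n)) / lnln_weight (real n)
    \<and> lnln_weight (real (ln_sq_cutoff n)) / lnln_weight (real n)
        \<le> lnln_weight (q n - 1) / lnln_weight (real n)) at_top"
  proof eventually_elim
    case (elim n)
    have "0 \<le> q n" using elim(1) exp_gt_zero[of "exp (1/2)"] by linarith
    hence "0 \<le> \<lfloor>q n\<rfloor>" by simp
    hence "real (ln_sq_cutoff n) = of_int \<lfloor>q n\<rfloor>"
      unfolding ln_sq_cutoff_def q_def by simp
    hence "q n - 1 \<le> real (ln_sq_cutoff n)" "real (ln_sq_cutoff n) \<le> q n"
      using real_of_int_floor_add_one_gt[of "q n"] of_int_floor_le[of "q n"] by linarith+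
    hence "lnln_weight (real n) \<le> lnln_weight (real (ln_sq_cutoff n))"
      "lnln_weight (real (ln_sq_cutoff n)) \<le> lnln_weight (q n - 1)"
      using elim(1,2) by (auto intro!: lnln_weight_antimono)
    thus ?case using elim(3) by (simp add: divide_right_mono)
  qed
  thus "eventually (\<lambda>n. 1 \<le> lnln_weight (real (ln_sq_cutoff n)) / lnln_weight (real n)) at_top"
    "eventually (\<lambda>n. lnln_weight (real (ln_sq_cutoff n)) / lnln_weight (real n)
        \<le> lnln_weight (q n - 1) / lnln_weight (real n)) at_top"
    by (auto elim: eventually_mono)
  show "((\<lambda>n. lnln_weight (q n - 1) / lnln_weight (real n)) \<longlongrightarrow> 1) at_top"
    unfolding q_def lnln_weight_def by real_asymp
qed simp

lemma ln_sq_cutoff_sum_smallo: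
  fixes S :: "nat \<Rightarrow> real"
  assumes upper: "S \<in> O(\<lambda>n. real n * (real n * ln (real n)))"
    and lower: "(\<lambda>n. real n ^ 2) \<in> O(S)"
  shows "(\<lambda>n. S (ln_sq_cutoff n)) \<in> o(\<lambda>n. lnln_weight (real n) * S n)"
proof -
  define m where "m n = real (ln_sq_cutoff n)" for n
  have "(\<lambda>n. S (ln_sq_cutoff n)) \<in> O(\<lambda>n. m n * (m n * ln (m n)))"
    unfolding m_def by (rule landau_o.big.compose[OF upper filterlim_ln_sq_cutoff])
  also have "(\<lambda>n. m n * (m n * ln (m n))) \<in> O(\<lambda>n. real n ^ 2 / ln (real n) ^ 3)"
  proof (rule landau_o.big_mono)
    have "eventually (\<lambda>n. 1 \<le> ln_sq_cutoff n) at_top"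
      using filterlim_ln_sq_cutoff by (simp add: filterlim_at_top)
    moreover have "eventually (\<lambda>n. 1 < real n) at_top" by real_asymp
    ultimately show "eventually (\<lambda>n. norm (m n * (m n * ln (m n)))
        \<le> norm (real n ^ 2 / ln (real n) ^ 3)) at_top"
      using eventually_ln_sq_cutoff_le
    proof eventually_elim
      case (elim n)
      define q where "q = real n / (ln (real n))^2"
      have "0 \<le> q" by (simp add: q_def)
      hence "m n \<le> q" unfolding m_def ln_sq_cutoff_def q_def[symmetric] by (rule of_nat_floor)
      moreover have "1 \<le> m n" "m n \<le> real n" using elim(1,3) unfolding m_def by auto
      ultimately have m: "1 \<le> m n" "m n \<le> q" "m n \<le> real n" by auto
      have "m n * (m n * ln (m n)) \<le> q * (q * ln (real n))"
        using m elim(2) by (intro mult_mono) auto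
      also have "\<dots> = real n ^ 2 / ln (real n) ^ 3"
        using elim(2) unfolding q_def by (simp add: power2_eq_square power3_eq_cube field_simps)
      finally show ?case using m by simp
    qed
  qed
  also have "(\<lambda>n. real n ^ 2 / ln (real n) ^ 3) \<in> o(\<lambda>n. lnln_weight (real n) * real n ^ 2)"
    unfolding lnln_weight_def by real_asymp
  also have "(\<lambda>n. lnln_weight (real n) * real n ^ 2) \<in> O(\<lambda>n. lnln_weight (real n) * S n)"
    by (rule landau_o.big.mult_left[OF lower])
  finally show ?thesis .
qed

subsection \<open>Partial sums of \<open>i a\<^sub>i\<close>\<close>

lemma positive_bounded_below_if_inverse_bigo:
  fixes a :: "nat \<Rightarrow> real"
  assumes pos: "\<And>n. 1 \<le> n \<Longrightarrow> 0 < a n" and bdd: "(\<lambda>n. 1 / a n) \<in> O(\<lambda>_. 1)"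
  obtains c where "0 < c" "\<And>n. 1 \<le> n \<Longrightarrow> c \<le> a n"
proof -
  obtain C where C: "0 < C" "eventually (\<lambda>n. norm (1 / a n) \<le> C * norm (1::real)) at_top"
    using bdd by (elim landau_o.bigE)
  then obtain N where N: "\<And>n. N \<le> n \<Longrightarrow> \<bar>1 / a n\<bar> \<le> C"
    by (auto simp: eventually_at_top_linorder)
  define c where "c = min (1 / C) (Min (a ` {1..Suc N}))"
  have "0 < c" using pos C(1) by (auto simp: c_def Min_gr_iff)
  moreover have "c \<le> a n" if "1 \<le> n" for n
  proof (cases "N \<le> n")
    case True
    hence "1 / a n \<le> C" using abs_le_D1[OF N] by blast
    hence "1 / C \<le> a n" using pos[OF that] C(1) by (simp add: field_simps)
    thus ?thesis unfolding c_def by linarith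
  next
    case False
    hence "Min (a ` {1..Suc N}) \<le> a n" using that by (intro Min_le) auto
    thus ?thesis unfolding c_def by linarith
  qed
  ultimately show thesis by (rule that)
qed

lemma square_bigo_sum_index_mult:
  fixes a :: "nat \<Rightarrow> real"
  assumes c: "0 < c" "\<And>i. 1 \<le> i \<Longrightarrow> c \<le> a i"
  shows "(\<lambda>n. real n ^ 2) \<in> O(\<lambda>n. \<Sum>i=3..n. real i * a i)"
proof (rule landau_o.bigI)
  have sum_index: "real n ^ 2 / 4 \<le> (\<Sum>i=3..n. real i)" if "3 \<le> n" for n
    using that
  proof (induction n rule: nat_induct_at_least)
    case (Suc n)
    have "real (Suc n) ^ 2 / 4 \<le> real n ^ 2 / 4 + real (Suc n)"
      by (simp add: power2_eq_square algebra_simps)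
    thus ?case using Suc by (simp add: sum.cl_ivl_Suc)
  qed (simp add: numeral_eq_Suc)
  show "eventually (\<lambda>n. norm (real n ^ 2) \<le> 4 / c * norm (\<Sum>i=3..n. real i * a i)) at_top"
    using eventually_ge_at_top[of 3]
  proof eventually_elim
    case (elim n)
    have "c * (real n ^ 2 / 4) \<le> c * (\<Sum>i=3..n. real i)"
      using sum_index[OF elim] c(1) by simp
    also have "\<dots> \<le> (\<Sum>i=3..n. real i * a i)"
      unfolding sum_distrib_left using c by (intro sum_mono) (simp add: mult.commute)
    also have "\<dots> \<le> norm (\<Sum>i=3..n. real i * a i)" by simp
    finally show ?case using c(1) by (simp add: field_simps)
  qed
qed (use c in simp)

lemma sum_index_mult_bigo:
  fixes a f :: "nat \<Rightarrow> real"
  assumes "1 \<le> k" "\<And>i. 1 \<le> i \<Longrightarrow> 0 \<le> a i" "(\<lambda>n. \<Sum>i=1..n. a i) \<in> O(f)"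
  shows "(\<lambda>n. \<Sum>i=k..n. real i * a i) \<in> O(\<lambda>n. real n * f n)"
proof -
  have "(\<lambda>n. \<Sum>i=k..n. real i * a i) \<in> O(\<lambda>n. real n * (\<Sum>i=1..n. a i))"
  proof (rule landau_o.big_mono, intro always_eventually allI)
    fix n
    have "0 \<le> (\<Sum>i=k..n. real i * a i)" using assms(1,2) by (intro sum_nonneg) auto
    hence "norm (\<Sum>i=k..n. real i * a i) \<le> (\<Sum>i=k..n. real n * a i)"
      using assms(1,2) by (auto intro!: sum_mono mult_right_mono)
    also have "\<dots> = real n * (\<Sum>i=k..n. a i)" by (simp add: sum_distrib_left)
    also have "\<dots> \<le> real n * (\<Sum>i=1..n. a i)"
      using assms(1,2) by (intro mult_left_mono sum_mono2) auto
    also have "\<dots> \<le> norm (real n * (\<Sum>i=1..n. a i))" by simp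
    finally show "norm (\<Sum>i=k..n. real i * a i) \<le> norm (real n * (\<Sum>i=1..n. a i))" .
  qed
  also have "(\<lambda>n. real n * (\<Sum>i=1..n. a i)) \<in> O(\<lambda>n. real n * f n)"
    by (rule landau_o.big.mult_left[OF assms(3)])
  finally show ?thesis .
qed

theorem lemma2:
  fixes a :: "nat \<Rightarrow> real" and \<epsilon> :: real
  assumes pos: "\<And>n. n \<ge> 1 \<Longrightarrow> a n > 0"
    and bdd: "(\<lambda>n. 1 / a n) \<in> O(\<lambda>_. 1)"
    and eps: "\<epsilon> > 0"
    and sum_bound: "(\<lambda>n. \<Sum>i=1..n. a i) \<in> O(\<lambda>n. real n * ln (real n) powr (1 - \<epsilon>))"
  shows "(\<lambda>n. \<Sum>i=3..n. ln (ln (real i)) / (ln (real i))^2 * (real i * a i))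
           \<sim>[at_top] (\<lambda>n. ln (ln (real n)) / (ln (real n))^2 * (\<Sum>i=3..n. real i * a i))"
proof -
  obtain c where c: "0 < c" "\<And>n. 1 \<le> n \<Longrightarrow> c \<le> a n"
    using positive_bounded_below_if_inverse_bigo[OF pos bdd] by blast
  have "(\<lambda>n. real n * ln (real n) powr (1 - \<epsilon>)) \<in> O(\<lambda>n. real n * ln (real n))"
    using eps by real_asymp
  hence "(\<lambda>n. \<Sum>i=1..n. a i) \<in> O(\<lambda>n. real n * ln (real n))"
    by (rule landau_o.big_trans[OF sum_bound])
  hence upper: "(\<lambda>n. \<Sum>i=3..n. real i * a i) \<in> O(\<lambda>n. real n * (real n * ln (real n)))"
    using pos by (intro sum_index_mult_bigo) (auto intro: less_imp_le)
  have "eventually (\<lambda>i. exp (exp (1/2)) \<le> real i) at_top" by real_asymp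
  hence antimono: "eventually (\<lambda>i. \<forall>j\<ge>i. lnln_weight (real j) \<le> lnln_weight (real i)) at_top"
    by (elim eventually_mono) (auto intro: lnln_weight_antimono)
  have "(\<lambda>n. \<Sum>i=3..n. lnln_weight (real i) * (real i * a i))
      \<sim>[at_top] (\<lambda>n. lnln_weight (real n) * (\<Sum>i=3..n. real i * a i))"
    using pos antimono eventually_ln_sq_cutoff_le filterlim_ln_sq_cutoff
      lnln_weight_ln_sq_cutoff_ratio
      ln_sq_cutoff_sum_smallo[OF upper square_bigo_sum_index_mult[OF c]]
    by (intro sum_weighted_asymp_equiv[where W = 1]) (auto intro: less_imp_le abs_lnln_weight_le_1)
  thus ?thesis unfolding lnln_weight_def .
qed

end
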